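(* For every $n\ge 3$, the polynomial $P_n(t)$ is $\gamma$-positive: writing $P_n(t)=\sum_{i=0}^{\lfloor (n-3)/2\rfloor}\gamma_i\,t^i(1+t)^{n-3-2i}$ (which is possible since $P_n$ is symmetric of degree $n-3$), all $\gamma_i$ are nonnegative integers.
   Context: For $n\ge3$, $P_n(t)\in\mathbb Z[t]$ is the polynomial with $[\overline{\mathcal M}_{0,n}]=P_n(\mathbb L)$ in the Grothendieck ring of varieties, $\mathbb L=[\mathbb A^1]$; equivalently, $P_3(t)=1$ and for $n>3$, $P_n(t)=P_{n-1}(t)(1+t)+t\sum_{i=3}^{n-2}\binom{n-2}{i-1}P_i(t)P_{n+1-i}(t)$. $P_n$ has degree $n-3$ and is palindromic. A polynomial $f(t)=\sum a_it^i$ is symmetric with center $d/2$ if $a_{d-i}=a_i$ for all $i$; such $f\in\mathbb Z[t]$ can be uniquely written $f(t)=\sum_{i=0}^{\lfloor d/2\rfloor}\gamma_i t^i(1+t)^{d-2i}$ with $\gamma_i\in\mathbb Z$, and $f$ is called $\gamma$-positive if all $\gamma_i\ge0$. *)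

theory Defs
  imports "HOL-Computational_Algebra.Polynomial"
begin

text \<open>The polynomials P_n (n >= 3) with [M_0,n-bar] = P_n(L).  P_3 = 1 and for n > 3
  P_n = P_{n-1}(1+t) + t * sum_{i=3}^{n-2} binom(n-2,i-1) P_i P_{n+1-i}.
  Values for n < 3 are irrelevant (set to 1).\<close>

function Pn :: "nat \<Rightarrow> int poly" where
  "Pn n = (if n \<le> 3 then 1 else
     Pn (n - 1) * [:1, 1:] +
     [:0, 1:] * (\<Sum>i\<in>{3..n-2}. of_nat ((n - 2) choose (i - 1)) * Pn i * Pn (n + 1 - i)))"
  by auto
termination
  by (relation "measure id") auto

definition gamma_positive :: "nat \<Rightarrow> int poly \<Rightarrow> bool" where
  "gamma_positive d f \<longleftrightarrow>
     (\<exists>\<gamma> :: nat \<Rightarrow> int. (\<forall>i \<le> d div 2. \<gamma> i \<ge> 0) \<and>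
        f = (\<Sum>i\<le>d div 2. smult (\<gamma> i) ([:0, 1:] ^ i * [:1, 1:] ^ (d - 2 * i))))"

end

theory Submission
  imports Defs
begin

text \<open>The \<gamma>-positive polynomials of center d/2, for varying d, form a graded semiring:
  they are closed under sums, under scaling by nonnegative integers, and under products
  (centers add, since the basis elements multiply as
  t^i (1+t)^(d-2i) \<cdot> t^j (1+t)^(e-2j) = t^(i+j) (1+t)^(d+e-2(i+j))).  The recursion for P_n
  builds P_n from 1+t (center 1/2), t (center 1), nonnegative binomial coefficients and
  earlier P_i by exactly these operations, with matching centers, so induction on n
  applies.\<close>

declare Pn.simps [simp del]

abbreviation gamma_basis :: "nat \<Rightarrow> nat \<Rightarrow> int poly" where
  "gamma_basis d i \<equiv> [:0, 1:] ^ i * [:1, 1:] ^ (d - 2 * i)"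

lemma smult_sum_right: "smult c (sum f S) = (\<Sum>i\<in>S. smult c (f i))"
  by (induction S rule: infinite_finite_induct) (auto simp: smult_add_right)

lemma gamma_positive_0: "gamma_positive d 0"
  unfolding gamma_positive_def by (rule exI [of _ "\<lambda>_. 0"]) simp

lemma gamma_positive_add:
  assumes "gamma_positive d f" "gamma_positive d g"
  shows "gamma_positive d (f + g)"
proof -
  obtain a b where a: "\<forall>i\<le>d div 2. 0 \<le> a i" "f = (\<Sum>i\<le>d div 2. smult (a i) (gamma_basis d i))"
    and b: "\<forall>i\<le>d div 2. 0 \<le> b i" "g = (\<Sum>i\<le>d div 2. smult (b i) (gamma_basis d i))"
    using assms unfolding gamma_positive_def by blast
  show ?thesis
    unfolding gamma_positive_def
    by (rule exI [of _ "\<lambda>i. a i + b i"]) (simp add: a b sum.distrib smult_add_left)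
qed

lemma gamma_positive_smult:
  assumes "c \<ge> 0" "gamma_positive d f"
  shows "gamma_positive d (smult c f)"
proof -
  obtain a where a: "\<forall>i\<le>d div 2. 0 \<le> a i" "f = (\<Sum>i\<le>d div 2. smult (a i) (gamma_basis d i))"
    using assms(2) unfolding gamma_positive_def by blast
  have "smult c f = (\<Sum>i\<le>d div 2. smult (c * a i) (gamma_basis d i))"
    by (simp add: a(2) smult_sum_right)
  then show ?thesis
    unfolding gamma_positive_def using assms(1) a(1) by (intro exI [of _ "\<lambda>i. c * a i"]) simp
qed

lemma gamma_positive_sum:
  assumes "\<And>s. s \<in> S \<Longrightarrow> gamma_positive d (f s)"
  shows "gamma_positive d (\<Sum>s\<in>S. f s)"
  using assms
  by (induction S rule: infinite_finite_induct) (auto intro: gamma_positive_0 gamma_positive_add)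

lemma gamma_positive_gamma_basis:
  assumes "2 * k \<le> d"
  shows "gamma_positive d (gamma_basis d k)"
  unfolding gamma_positive_def
proof (intro exI [of _ "\<lambda>i. if i = k then 1 else 0"] conjI)
  have "k \<le> d div 2" using assms by linarith
  then show "gamma_basis d k = (\<Sum>i\<le>d div 2. smult (if i = k then 1 else 0) (gamma_basis d i))"
    by (simp add: if_distrib [of "\<lambda>c. smult c _"] cong: if_cong)
qed simp

lemma gamma_basis_mult:
  assumes "2 * i \<le> d" "2 * j \<le> e"
  shows "gamma_basis d i * gamma_basis e j = gamma_basis (d + e) (i + j)"
proof -
  have "d + e - 2 * (i + j) = (d - 2 * i) + (e - 2 * j)" using assms by simp
  then show ?thesis by (simp add: power_add algebra_simps)
qed

lemma gamma_positive_mult: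
  assumes "gamma_positive d f" "gamma_positive e g"
  shows "gamma_positive (d + e) (f * g)"
proof -
  obtain a where a: "\<forall>i\<le>d div 2. 0 \<le> a i" "f = (\<Sum>i\<le>d div 2. smult (a i) (gamma_basis d i))"
    using assms(1) unfolding gamma_positive_def by blast
  obtain b where b: "\<forall>j\<le>e div 2. 0 \<le> b j" "g = (\<Sum>j\<le>e div 2. smult (b j) (gamma_basis e j))"
    using assms(2) unfolding gamma_positive_def by blast
  have "f * g = (\<Sum>i\<le>d div 2. \<Sum>j\<le>e div 2. smult (a i * b j) (gamma_basis d i * gamma_basis e j))"
    by (simp add: a(2) b(2) sum_product mult.commute)
  also have "\<dots> = (\<Sum>i\<le>d div 2. \<Sum>j\<le>e div 2. smult (a i * b j) (gamma_basis (d + e) (i + j)))"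
    by (intro sum.cong refl) (simp add: gamma_basis_mult)
  also have "gamma_positive (d + e) \<dots>"
    using a(1) b(1)
    by (intro gamma_positive_sum gamma_positive_smult gamma_positive_gamma_basis) auto
  finally show ?thesis .
qed

lemma gamma_positive_1: "gamma_positive 0 1"
  using gamma_positive_gamma_basis [of 0 0] by simp

lemma gamma_positive_one_plus_t: "gamma_positive 1 [:1, 1:]"
  using gamma_positive_gamma_basis [of 0 1] by simp

lemma gamma_positive_t: "gamma_positive 2 [:0, 1:]"
  using gamma_positive_gamma_basis [of 1 2] by simp

lemma gamma_positive_of_nat: "gamma_positive 0 (of_nat k)"
  using gamma_positive_smult [OF _ gamma_positive_1, of "of_nat k"] by (simp add: of_nat_poly)

lemma Pn_3: "Pn 3 = 1"
  by (subst Pn.simps) simp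

lemma Pn_rec:
  assumes "n \<ge> 4"
  shows "Pn n = Pn (n - 1) * [:1, 1:] +
    [:0, 1:] * (\<Sum>i\<in>{3..n-2}. of_nat ((n - 2) choose (i - 1)) * Pn i * Pn (n + 1 - i))"
  using assms by (subst Pn.simps) simp

lemma gamma_positive_Pn_step:
  assumes "n \<ge> 4" and IH: "\<And>m. 3 \<le> m \<Longrightarrow> m < n \<Longrightarrow> gamma_positive (m - 3) (Pn m)"
  shows "gamma_positive (n - 3) (Pn n)"
proof -
  have "n - 1 - 3 + 1 = n - 3"
    using \<open>n \<ge> 4\<close> by simp
  have "gamma_positive (n - 1 - 3) (Pn (n - 1))"
    using assms by (intro IH) auto
  from gamma_positive_mult [OF this gamma_positive_one_plus_t]
  have shifted_term: "gamma_positive (n - 3) (Pn (n - 1) * [:1, 1:])"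
    by (simp only: \<open>n - 1 - 3 + 1 = n - 3\<close>)
  have convolution_term: "gamma_positive (n - 3)
      ([:0, 1:] * (\<Sum>i\<in>{3..n-2}. of_nat ((n - 2) choose (i - 1)) * Pn i * Pn (n + 1 - i)))"
  proof (cases "n = 4")
    case True
    \<comment> \<open>the sum is empty\<close>
    then show ?thesis by (simp add: gamma_positive_0)
  next
    case False
    then have "2 + (n - 5) = n - 3"
      using \<open>n \<ge> 4\<close> by simp
    have "gamma_positive (n - 5) (of_nat ((n - 2) choose (i - 1)) * Pn i * Pn (n + 1 - i))"
      if i: "i \<in> {3..n-2}" for i
    proof -
      have "0 + (i - 3) + (n + 1 - i - 3) = n - 5"
        using i by auto
      have "gamma_positive (i - 3) (Pn i)" "gamma_positive (n + 1 - i - 3) (Pn (n + 1 - i))"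
        using i by (intro IH; auto)+
      from gamma_positive_mult [OF gamma_positive_mult [OF gamma_positive_of_nat this(1)] this(2)]
      show ?thesis
        by (simp only: \<open>0 + (i - 3) + (n + 1 - i - 3) = n - 5\<close>)
    qed
    then have "gamma_positive (n - 5)
        (\<Sum>i\<in>{3..n-2}. of_nat ((n - 2) choose (i - 1)) * Pn i * Pn (n + 1 - i))"
      by (rule gamma_positive_sum)
    from gamma_positive_mult [OF gamma_positive_t this]
    show ?thesis
      by (simp only: \<open>2 + (n - 5) = n - 3\<close>)
  qed
  show ?thesis
    unfolding Pn_rec [OF \<open>n \<ge> 4\<close>] using shifted_term convolution_term by (rule gamma_positive_add)
qed

theorem theorem1p3:
  fixes n :: nat
  assumes "n \<ge> 3"
  shows "gamma_positive (n - 3) (Pn n)"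
  using assms
proof (induction n rule: less_induct)
  case (less n)
  show ?case
  proof (cases "n = 3")
    case True
    then show ?thesis by (simp only: Pn_3 gamma_positive_1 diff_self_eq_0)
  next
    case False
    with less.prems have "n \<ge> 4" by simp
    then show ?thesis by (rule gamma_positive_Pn_step) (rule less.IH)
  qed
qed

end
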